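(* Let $N$ be finite, $\mathbf{P}$ stochastic on $N$, $0<\beta<1$, $\mathbf{R}\in\mathbb{R}^N$, $S\subseteq N$ and $\nu\in\mathbb R$. For every stopping rule $\tau$ and every $i\in N$: (a) $g_i^\tau=g_i^S-\sum_{j\in S}w_j^Sx_{ij}^{0,\tau}+\sum_{j\in S^c}w_j^Sx_{ij}^{1,\tau}$; (b) $f_i^\tau=f_i^S-\sum_{j\in S}r_j^Sx_{ij}^{0,\tau}+\sum_{j\in S^c}r_j^Sx_{ij}^{1,\tau}$; (c) $f_i^\tau-\nu g_i^\tau=f_i^S-\nu g_i^S-\sum_{j\in S}(r_j^S-\nu w_j^S)x_{ij}^{0,\tau}+\sum_{j\in S^c}(r_j^S-\nu w_j^S)x_{ij}^{1,\tau}$.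
   Context: $N$ is a finite state set, $\mathbf{P}=(p_{ij})$ stochastic, $\beta\in(0,1)$, $\mathbf{R}=(R_j)$; $X(t)$ is the Markov chain with matrix $\mathbf{P}$, $\mathsf{E}_i$ is expectation given $X(0)=i$, $S^c=N\setminus S$. A stopping rule is a (possibly randomized) stopping time $\tau\in\{0,1,\dots\}\cup\{\infty\}$ for the chain's history. Define $f_i^\tau=\mathsf{E}_i[\sum_{t=0}^{\tau-1}R_{X(t)}\beta^t]$, $g_i^\tau=\mathsf{E}_i[\sum_{t=0}^{\tau-1}\beta^t]$, and occupancy measures $x_{ij}^{1,\tau}=\mathsf{E}_i[\sum_{t=0}^{\tau-1}1_{\{X(t)=j\}}\beta^t]$ and $x_{ij}^{0,\tau}=\mathsf{E}_i[1_{\{\tau<\infty,X(\tau)=j\}}\beta^\tau]/(1-\beta)$ (the discounted time spent passive at $j$ when, after stopping, the chain remains frozen at $X(\tau)$ forever). For $S\subseteq N$ let $\tau_S=\min\{t\ge0:X(t)\notin S\}$, $f_i^S=f_i^{\tau_S}$, $g_i^S=g_i^{\tau_S}$, and $$w_i^S=1+\beta\sum_{j}p_{ij}g_j^S-\beta g_i^S,\qquad r_i^S=R_i+\beta\sum_jp_{ij}f_j^S-\beta f_i^S.$$ *)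

theory Defs
  imports Complex_Main
begin

definition stochastic :: "('n::finite \<Rightarrow> 'n \<Rightarrow> real) \<Rightarrow> bool" where
  "stochastic P \<longleftrightarrow> (\<forall>i j. 0 \<le> P i j) \<and> (\<forall>i. (\<Sum>j\<in>UNIV. P i j) = 1)"

text \<open>A (possibly randomized) stopping rule, in behavioural form: q h is the conditional
  probability of stopping at time t given the history h = [X(0),...,X(t)] and that the
  rule has not stopped before time t.\<close>

definition stopping_rule :: "('n list \<Rightarrow> real) \<Rightarrow> bool" where
  "stopping_rule q \<longleftrightarrow> (\<forall>h. 0 \<le> q h \<and> q h \<le> 1)"

text \<open>Probability of the path X(1..t) given X(0) = hd h.\<close>
fun path_prob :: "('n \<Rightarrow> 'n \<Rightarrow> real) \<Rightarrow> 'n list \<Rightarrow> real" where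
  "path_prob P [] = 1"
| "path_prob P [x] = 1"
| "path_prob P (x # y # xs) = P x y * path_prob P (y # xs)"

text \<open>Histories of length t+1 (times 0..t) starting at i.\<close>
definition histories :: "'n \<Rightarrow> nat \<Rightarrow> 'n list set" where
  "histories i t = {h. length h = Suc t \<and> hd h = i}"

text \<open>P_i(X(0..t) = h and tau >= t)\<close>
definition reach :: "('n \<Rightarrow> 'n \<Rightarrow> real) \<Rightarrow> ('n list \<Rightarrow> real) \<Rightarrow> 'n list \<Rightarrow> real" where
  "reach P q h = path_prob P h * (\<Prod>k<length h - 1. 1 - q (take (Suc k) h))"

text \<open>P_i(X(0..t) = h and tau > t)\<close>
definition cont :: "('n \<Rightarrow> 'n \<Rightarrow> real) \<Rightarrow> ('n list \<Rightarrow> real) \<Rightarrow> 'n list \<Rightarrow> real" where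
  "cont P q h = reach P q h * (1 - q h)"

text \<open>P_i(X(0..t) = h and tau = t)\<close>
definition stopp :: "('n \<Rightarrow> 'n \<Rightarrow> real) \<Rightarrow> ('n list \<Rightarrow> real) \<Rightarrow> 'n list \<Rightarrow> real" where
  "stopp P q h = reach P q h * q h"

text \<open>f_i^tau = E_i[ sum_{t<tau} R(X t) beta^t ]\<close>
definition f_val :: "('n::finite \<Rightarrow> 'n \<Rightarrow> real) \<Rightarrow> real \<Rightarrow> ('n \<Rightarrow> real) \<Rightarrow> ('n list \<Rightarrow> real) \<Rightarrow> 'n \<Rightarrow> real" where
  "f_val P \<beta> R q i = (\<Sum>t. \<beta> ^ t * (\<Sum>h\<in>histories i t. cont P q h * R (last h)))"

text \<open>g_i^tau = E_i[ sum_{t<tau} beta^t ]\<close>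
definition g_val :: "('n::finite \<Rightarrow> 'n \<Rightarrow> real) \<Rightarrow> real \<Rightarrow> ('n list \<Rightarrow> real) \<Rightarrow> 'n \<Rightarrow> real" where
  "g_val P \<beta> q i = (\<Sum>t. \<beta> ^ t * (\<Sum>h\<in>histories i t. cont P q h))"

text \<open>x_{ij}^{1,tau} = E_i[ sum_{t<tau} 1{X t = j} beta^t ]\<close>
definition x1 :: "('n::finite \<Rightarrow> 'n \<Rightarrow> real) \<Rightarrow> real \<Rightarrow> ('n list \<Rightarrow> real) \<Rightarrow> 'n \<Rightarrow> 'n \<Rightarrow> real" where
  "x1 P \<beta> q i j = (\<Sum>t. \<beta> ^ t * (\<Sum>h\<in>histories i t. if last h = j then cont P q h else 0))"

text \<open>x_{ij}^{0,tau} = E_i[ 1{tau < inf, X tau = j} beta^tau ] / (1 - beta)\<close>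
definition x0 :: "('n::finite \<Rightarrow> 'n \<Rightarrow> real) \<Rightarrow> real \<Rightarrow> ('n list \<Rightarrow> real) \<Rightarrow> 'n \<Rightarrow> 'n \<Rightarrow> real" where
  "x0 P \<beta> q i j = (\<Sum>t. \<beta> ^ t * (\<Sum>h\<in>histories i t. if last h = j then stopp P q h else 0)) / (1 - \<beta>)"

text \<open>tau_S = min{t. X t \<notin> S}: stop exactly when the current state leaves S.\<close>
definition exit_rule :: "'n set \<Rightarrow> 'n list \<Rightarrow> real" where
  "exit_rule S h = (if last h \<in> S then 0 else 1)"

definition fS :: "('n::finite \<Rightarrow> 'n \<Rightarrow> real) \<Rightarrow> real \<Rightarrow> ('n \<Rightarrow> real) \<Rightarrow> 'n set \<Rightarrow> 'n \<Rightarrow> real" where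
  "fS P \<beta> R S i = f_val P \<beta> R (exit_rule S) i"

definition gS :: "('n::finite \<Rightarrow> 'n \<Rightarrow> real) \<Rightarrow> real \<Rightarrow> 'n set \<Rightarrow> 'n \<Rightarrow> real" where
  "gS P \<beta> S i = g_val P \<beta> (exit_rule S) i"

definition wS :: "('n::finite \<Rightarrow> 'n \<Rightarrow> real) \<Rightarrow> real \<Rightarrow> 'n set \<Rightarrow> 'n \<Rightarrow> real" where
  "wS P \<beta> S i = 1 + \<beta> * (\<Sum>j\<in>UNIV. P i j * gS P \<beta> S j) - \<beta> * gS P \<beta> S i"

definition rS :: "('n::finite \<Rightarrow> 'n \<Rightarrow> real) \<Rightarrow> real \<Rightarrow> ('n \<Rightarrow> real) \<Rightarrow> 'n set \<Rightarrow> 'n \<Rightarrow> real" where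
  "rS P \<beta> R S i = R i + \<beta> * (\<Sum>j\<in>UNIV. P i j * fS P \<beta> R S j) - \<beta> * fS P \<beta> R S i"

end

theory Submission
  imports Defs
begin

text \<open>Every quantity is a discounted functional
  \<open>V c \<psi> = \<Sum>\<^sub>t \<beta>^t \<Sum>\<^sub>h c h * \<psi> (last h)\<close> over histories, weighted by \<open>c = cont\<close>
  (still running) or \<open>c = stopp\<close> (stopping now) and linear in \<open>\<psi>\<close>; so \<open>f\<^sup>\<tau> = \<Sum>\<^sub>j R j * x1 i j\<close>.
  Telescoping \<open>\<beta>^t \<phi> (X t)\<close> along the stopped path gives, for every \<open>\<phi>\<close>,
  \<open>\<phi> i = \<Sum>\<^sub>j (\<phi> j - \<beta> (P \<phi>) j) * x1 i j + (1 - \<beta>) \<Sum>\<^sub>j \<phi> j * x0 i j\<close>.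
  For \<open>\<phi> = f\<^sup>S\<close>, which vanishes off \<open>S\<close> and satisfies \<open>f\<^sup>S = R + \<beta> P f\<^sup>S\<close> on \<open>S\<close>
  (so \<open>r\<^sup>S = (1 - \<beta>) f\<^sup>S\<close> there), subtracting the two identities gives (b); (a) is (b) with
  \<open>R = 1\<close>, and (c) is their linear combination.\<close>

lemma finite_histories: "finite (histories (i::'n::finite) t)"
proof -
  have "histories i t \<subseteq> {xs. set xs \<subseteq> UNIV \<and> length xs = Suc t}"
    by (auto simp: histories_def)
  thus ?thesis using finite_lists_length_eq[of "UNIV::'n set" "Suc t"] finite_subset by auto
qed

lemma histories_0: "histories i 0 = {[i]}"
  by (auto simp: histories_def length_Suc_conv)

lemma histories_nonempty: "h \<in> histories i t \<Longrightarrow> h \<noteq> []"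
  by (auto simp: histories_def)

lemma histories_Suc_snoc: "histories i (Suc t) = (\<lambda>(h, j). h @ [j]) ` (histories i t \<times> UNIV)"
proof
  show "histories i (Suc t) \<subseteq> (\<lambda>(h, j). h @ [j]) ` (histories i t \<times> UNIV)"
  proof
    fix h assume h: "h \<in> histories i (Suc t)"
    obtain ys y where e: "h = ys @ [y]"
      using h by (cases h rule: rev_exhaust) (auto simp: histories_def)
    have "ys \<noteq> []" using h e by (auto simp: histories_def)
    hence "ys \<in> histories i t" using h e by (auto simp: histories_def hd_append)
    thus "h \<in> (\<lambda>(h, j). h @ [j]) ` (histories i t \<times> UNIV)" using e by auto
  qed
qed (auto simp: histories_def hd_append)

lemma sum_histories_Suc_snoc:
  "(\<Sum>h\<in>histories (i::'n::finite) (Suc t). F h) = (\<Sum>h\<in>histories i t. \<Sum>j\<in>UNIV. F (h @ [j]))"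
proof -
  have "inj_on (\<lambda>(h, j). h @ [j]) (histories i t \<times> (UNIV::'n set))"
    by (auto simp: inj_on_def)
  hence "(\<Sum>h\<in>histories i (Suc t). F h) = (\<Sum>(h, j)\<in>histories i t \<times> UNIV. F (h @ [j]))"
    unfolding histories_Suc_snoc by (subst sum.reindex) (simp_all add: case_prod_unfold)
  thus ?thesis by (simp add: sum.cartesian_product)
qed

lemma histories_Suc_Cons: "histories j (Suc t) = (\<lambda>(k, h). j # h) ` (SIGMA k:UNIV. histories k t)"
proof
  show "histories j (Suc t) \<subseteq> (\<lambda>(k, h). j # h) ` (SIGMA k:UNIV. histories k t)"
  proof
    fix h assume h: "h \<in> histories j (Suc t)"
    obtain h' where e: "h = j # h'" using h by (cases h) (auto simp: histories_def)
    have "h' \<in> histories (hd h') t" using h e by (auto simp: histories_def)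
    thus "h \<in> (\<lambda>(k, h). j # h) ` (SIGMA k:UNIV. histories k t)" using e by force
  qed
qed (auto simp: histories_def)

lemma sum_histories_Suc_Cons:
  "(\<Sum>h\<in>histories (j::'n::finite) (Suc t). F h) = (\<Sum>k\<in>UNIV. \<Sum>h\<in>histories k t. F (j # h))"
proof -
  have "inj_on (\<lambda>(k, h). j # h) (SIGMA k:(UNIV::'n set). histories k t)"
    by (auto simp: inj_on_def histories_def)
  hence "(\<Sum>h\<in>histories j (Suc t). F h) = (\<Sum>(k, h)\<in>(SIGMA k:UNIV. histories k t). F (j # h))"
    unfolding histories_Suc_Cons by (subst sum.reindex) (simp_all add: case_prod_unfold)
  thus ?thesis by (simp add: sum.Sigma finite_histories)
qed

lemma path_prob_snoc: "h \<noteq> [] \<Longrightarrow> path_prob P (h @ [j]) = path_prob P h * P (last h) j"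
  by (induction P h rule: path_prob.induct) auto

lemma path_prob_Cons: "h \<noteq> [] \<Longrightarrow> path_prob P (j # h) = P j (hd h) * path_prob P h"
  by (cases h) auto

lemma path_prob_nonneg: "(\<And>a b. 0 \<le> P a b) \<Longrightarrow> 0 \<le> path_prob P h"
  by (induction P h rule: path_prob.induct) auto

lemma reach_singleton: "reach P q [i] = 1"
  by (simp add: reach_def)

lemma reach_snoc:
  assumes "h \<noteq> []" shows "reach P q (h @ [j]) = cont P q h * P (last h) j"
proof -
  obtain n where n: "length h = Suc n" using assms by (cases h) auto
  have "(\<Prod>k<length (h @ [j]) - 1. 1 - q (take (Suc k) (h @ [j])))
      = (\<Prod>k<Suc n. 1 - q (take (Suc k) h))"
    using n by (intro prod.cong) auto
  also have "\<dots> = (\<Prod>k<n. 1 - q (take (Suc k) h)) * (1 - q h)" using n by simp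
  finally show ?thesis using n assms by (simp add: reach_def cont_def path_prob_snoc mult_ac)
qed

text \<open>The exit rule is Markovian: whether it stops depends only on the current state, so a history
  can be split at its first step.\<close>

lemma reach_exit_rule_Cons:
  assumes "h \<noteq> []"
  shows "reach P (exit_rule S) (j # h)
       = P j (hd h) * (1 - exit_rule S [j]) * reach P (exit_rule S) h"
proof -
  obtain n where n: "length h = Suc n" using assms by (cases h) auto
  have "(\<Prod>k<length (j # h) - 1. 1 - exit_rule S (take (Suc k) (j # h)))
      = (1 - exit_rule S [j]) * (\<Prod>k<n. 1 - exit_rule S (take (Suc (Suc k)) (j # h)))"
    using n by (simp add: prod.lessThan_Suc_shift del: prod.lessThan_Suc)
  also have "(\<Prod>k<n. 1 - exit_rule S (take (Suc (Suc k)) (j # h)))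
           = (\<Prod>k<n. 1 - exit_rule S (take (Suc k) h))"
    using assms by (intro prod.cong) (auto simp: exit_rule_def)
  finally show ?thesis using n assms by (simp add: reach_def path_prob_Cons mult_ac)
qed

lemma cont_exit_rule_Cons:
  "h \<noteq> [] \<Longrightarrow> cont P (exit_rule S) (j # h)
     = P j (hd h) * (1 - exit_rule S [j]) * cont P (exit_rule S) h"
  by (simp add: cont_def reach_exit_rule_Cons exit_rule_def)

lemma stopping_rule_exit_rule: "stopping_rule (exit_rule S)"
  by (simp add: stopping_rule_def exit_rule_def)

context
  fixes P :: "'n::finite \<Rightarrow> 'n \<Rightarrow> real" and q :: "'n list \<Rightarrow> real"
  assumes P: "stochastic P" and q: "stopping_rule q"
begin

lemma reach_nonneg: "0 \<le> reach P q h"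
  using P q unfolding reach_def stochastic_def stopping_rule_def
  by (intro mult_nonneg_nonneg path_prob_nonneg prod_nonneg) auto

lemma abs_cont_le_reach: "\<bar>cont P q h\<bar> \<le> reach P q h"
  using reach_nonneg[of h] q unfolding cont_def stopping_rule_def
  by (auto simp: mult_left_le)

lemma abs_stopp_le_reach: "\<bar>stopp P q h\<bar> \<le> reach P q h"
  using reach_nonneg[of h] q unfolding stopp_def stopping_rule_def
  by (auto simp: mult_left_le)

lemma sum_reach_histories_le_1: "(\<Sum>h\<in>histories i t. reach P q h) \<le> 1"
proof (induction t)
  case 0 thus ?case by (simp add: histories_0 reach_singleton)
next
  case (Suc t)
  have "(\<Sum>h\<in>histories i (Suc t). reach P q h) = (\<Sum>h\<in>histories i t. cont P q h)"
    using P by (simp add: sum_histories_Suc_snoc reach_snoc histories_nonempty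
        sum_distrib_left[symmetric] stochastic_def cong: sum.cong)
  also have "\<dots> \<le> (\<Sum>h\<in>histories i t. reach P q h)"
    using abs_cont_le_reach by (intro sum_mono) (simp add: abs_le_iff)
  finally show ?case using Suc by linarith
qed

lemma abs_sum_histories_le:
  assumes c: "\<And>h. \<bar>c h\<bar> \<le> reach P q h"
  shows "\<bar>\<Sum>h\<in>histories i t. c h * \<psi> (last h)\<bar> \<le> (\<Sum>l\<in>UNIV. \<bar>\<psi> l\<bar>)"
proof -
  define M where "M = (\<Sum>l\<in>UNIV. \<bar>\<psi> l\<bar>)"
  have \<psi>M: "\<bar>\<psi> x\<bar> \<le> M" for x unfolding M_def by (rule member_le_sum) auto
  have "\<bar>\<Sum>h\<in>histories i t. c h * \<psi> (last h)\<bar> \<le> (\<Sum>h\<in>histories i t. \<bar>c h\<bar> * \<bar>\<psi> (last h)\<bar>)"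
    by (metis (no_types, lifting) abs_mult sum.cong sum_abs)
  also have "\<dots> \<le> (\<Sum>h\<in>histories i t. reach P q h) * M"
    unfolding sum_distrib_right by (intro sum_mono mult_mono c \<psi>M) (auto intro: reach_nonneg)
  also have "\<dots> \<le> M"
    using sum_reach_histories_le_1 \<psi>M[of undefined]
    by (intro mult_left_le_one_le) (auto intro: sum_nonneg reach_nonneg order_trans[OF abs_ge_zero])
  finally show ?thesis by (simp add: M_def)
qed

end

definition disc_value :: "real \<Rightarrow> ('n::finite list \<Rightarrow> real) \<Rightarrow> 'n \<Rightarrow> ('n \<Rightarrow> real) \<Rightarrow> real" where
  "disc_value \<beta> c i \<psi> = (\<Sum>t. \<beta> ^ t * (\<Sum>h\<in>histories i t. c h * \<psi> (last h)))"

abbreviation indicator_state :: "'n \<Rightarrow> 'n \<Rightarrow> real" where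
  "indicator_state j \<equiv> \<lambda>l. if l = j then 1 else 0"

lemma x1_eq_disc_value: "x1 P \<beta> q i j = disc_value \<beta> (cont P q) i (indicator_state j)"
  unfolding x1_def disc_value_def
  by (intro suminf_cong arg_cong2[where f="(*)"] refl sum.cong) auto

lemma x0_eq_disc_value:
  "\<beta> < 1 \<Longrightarrow> (1 - \<beta>) * x0 P \<beta> q i j = disc_value \<beta> (stopp P q) i (indicator_state j)"
  unfolding x0_def disc_value_def
  by (simp, intro suminf_cong arg_cong2[where f="(*)"] refl sum.cong) auto

context
  fixes P :: "'n::finite \<Rightarrow> 'n \<Rightarrow> real" and q :: "'n list \<Rightarrow> real" and \<beta> :: real
  assumes P: "stochastic P" and q: "stopping_rule q" and \<beta>: "0 \<le> \<beta>" "\<beta> < 1"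
begin

lemma summable_disc_value:
  assumes "\<And>h. \<bar>c h\<bar> \<le> reach P q h"
  shows "summable (\<lambda>t. \<beta> ^ t * (\<Sum>h\<in>histories i t. c h * \<psi> (last h)))"
proof (rule summable_comparison_test)
  show "summable (\<lambda>t. (\<Sum>l\<in>UNIV. \<bar>\<psi> l\<bar>) * \<beta> ^ t)"
    using \<beta> by (intro summable_mult summable_geometric) auto
  show "\<exists>N. \<forall>n\<ge>N. norm (\<beta> ^ n * (\<Sum>h\<in>histories i n. c h * \<psi> (last h)))
                    \<le> (\<Sum>l\<in>UNIV. \<bar>\<psi> l\<bar>) * \<beta> ^ n"
    using abs_sum_histories_le[OF P q assms] \<beta>
    by (auto simp: abs_mult mult.commute intro!: mult_left_mono)
qed

lemma disc_value_eq_sum_indicator: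
  assumes c: "\<And>h. \<bar>c h\<bar> \<le> reach P q h"
  shows "disc_value \<beta> c i \<psi> = (\<Sum>j\<in>UNIV. \<psi> j * disc_value \<beta> c i (indicator_state j))"
proof -
  define X where "X j t = \<beta> ^ t * (\<Sum>h\<in>histories i t. c h * indicator_state j (last h))" for j t
  have "\<beta> ^ t * (\<Sum>h\<in>histories i t. c h * \<psi> (last h)) = (\<Sum>j\<in>UNIV. \<psi> j * X j t)" for t
  proof -
    have "(\<Sum>h\<in>histories i t. c h * \<psi> (last h))
        = (\<Sum>h\<in>histories i t. \<Sum>j\<in>UNIV. \<psi> j * (c h * indicator_state j (last h)))"
      by (rule sum.cong) (auto simp: if_distrib cong: if_cong)
    thus ?thesis
      by (simp add: X_def sum_distrib_left sum.swap[of _ UNIV] mult.left_commute)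
  qed
  moreover have "summable (X j)" for j unfolding X_def by (rule summable_disc_value[OF c])
  ultimately have "disc_value \<beta> c i \<psi> = (\<Sum>j\<in>UNIV. \<psi> j * suminf (X j))"
    unfolding disc_value_def by (simp add: suminf_sum summable_mult suminf_mult)
  thus ?thesis unfolding X_def disc_value_def .
qed

text \<open>Telescoping \<open>A t = \<beta>\<^sup>t E[\<phi>(X t); \<tau> \<ge> t]\<close>: at each time the mass still running either stops
  (contributing \<open>\<phi>\<close>) or continues, and \<open>A t \<rightarrow> 0\<close> because \<open>\<beta> < 1\<close>.\<close>

lemma disc_value_telescope:
  "\<phi> i = disc_value \<beta> (cont P q) i (\<lambda>l. \<phi> l - \<beta> * (\<Sum>k\<in>UNIV. P l k * \<phi> k))
        + disc_value \<beta> (stopp P q) i \<phi>"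
proof -
  define \<psi> where "\<psi> l = \<phi> l - \<beta> * (\<Sum>k\<in>UNIV. P l k * \<phi> k)" for l
  define A where "A t = \<beta> ^ t * (\<Sum>h\<in>histories i t. reach P q h * \<phi> (last h))" for t
  define T1 where "T1 t = \<beta> ^ t * (\<Sum>h\<in>histories i t. cont P q h * \<psi> (last h))" for t
  define T2 where "T2 t = \<beta> ^ t * (\<Sum>h\<in>histories i t. stopp P q h * \<phi> (last h))" for t
  have A_Suc: "A (Suc t)
      = \<beta> ^ Suc t * (\<Sum>h\<in>histories i t. cont P q h * (\<Sum>k\<in>UNIV. P (last h) k * \<phi> k))" for t
    by (simp add: A_def sum_histories_Suc_snoc reach_snoc histories_nonempty sum_distrib_left
        mult_ac cong: sum.cong)
  have step: "T1 t + T2 t = A t - A (Suc t)" for t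
  proof -
    have "T1 t + T2 t = \<beta> ^ t * (\<Sum>h\<in>histories i t. reach P q h * \<phi> (last h)
                         - \<beta> * (cont P q h * (\<Sum>k\<in>UNIV. P (last h) k * \<phi> k)))"
      unfolding T1_def T2_def distrib_left[symmetric] sum.distrib[symmetric]
      by (intro arg_cong2[where f="(*)"] refl sum.cong) (auto simp: cont_def stopp_def \<psi>_def algebra_simps)
    thus ?thesis unfolding A_Suc
      by (simp add: A_def sum_subtractf sum_distrib_left right_diff_distrib mult_ac)
  qed
  have A_0: "A 0 = \<phi> i" by (simp add: A_def histories_0 reach_singleton)
  have "summable A" unfolding A_def
    by (rule summable_disc_value) (simp add: reach_nonneg[OF P q])
  hence "(\<lambda>n. \<phi> i - A n) \<longlonglongrightarrow> \<phi> i - 0"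
    by (intro tendsto_intros summable_LIMSEQ_zero)
  moreover have "(\<Sum>t<n. T1 t + T2 t) = \<phi> i - A n" for n
    using A_0 by (simp add: step sum_lessThan_telescope')
  ultimately have "(\<lambda>t. T1 t + T2 t) sums \<phi> i" by (simp add: sums_def)
  moreover have "summable T1" "summable T2" unfolding T1_def T2_def
    using abs_cont_le_reach[OF P q] abs_stopp_le_reach[OF P q] by (auto intro: summable_disc_value)
  ultimately have "\<phi> i = (\<Sum>t. T1 t) + (\<Sum>t. T2 t)" by (simp add: sums_iff suminf_add)
  thus ?thesis unfolding T1_def T2_def disc_value_def \<psi>_def .
qed

lemma f_val_eq_sum_x1: "f_val P \<beta> R q i = (\<Sum>j\<in>UNIV. R j * x1 P \<beta> q i j)"
  using disc_value_eq_sum_indicator[OF abs_cont_le_reach[OF P q], of i R]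
  by (simp add: f_val_def disc_value_def x1_eq_disc_value)

lemma telescope_occupancy:
  "\<phi> i = (\<Sum>j\<in>UNIV. (\<phi> j - \<beta> * (\<Sum>k\<in>UNIV. P j k * \<phi> k)) * x1 P \<beta> q i j)
        + (\<Sum>j\<in>UNIV. \<phi> j * ((1 - \<beta>) * x0 P \<beta> q i j))"
  using disc_value_telescope[of \<phi> i] \<beta>
    disc_value_eq_sum_indicator[OF abs_cont_le_reach[OF P q], of i "\<lambda>l. \<phi> l - \<beta> * (\<Sum>k\<in>UNIV. P l k * \<phi> k)"]
    disc_value_eq_sum_indicator[OF abs_stopp_le_reach[OF P q], of i \<phi>]
  by (simp add: x1_eq_disc_value x0_eq_disc_value)

end

lemma fS_Bellman:
  fixes P :: "'n::finite \<Rightarrow> 'n \<Rightarrow> real"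
  assumes P: "stochastic P" and \<beta>: "0 \<le> \<beta>" "\<beta> < 1"
  shows "fS P \<beta> R S j = (if j \<in> S then R j + \<beta> * (\<Sum>k\<in>UNIV. P j k * fS P \<beta> R S k) else 0)"
proof -
  define E where "E = exit_rule S"
  define a where "a j t = (\<Sum>h\<in>histories j t. cont P E h * R (last h))" for j t
  have a_0: "a j 0 = (1 - E [j]) * R j" for j
    by (simp add: a_def histories_0 cont_def reach_singleton)
  have a_Suc: "a j (Suc t) = (1 - E [j]) * (\<Sum>k\<in>UNIV. P j k * a k t)" for j t
  proof -
    have "a j (Suc t) = (\<Sum>k\<in>UNIV. \<Sum>h\<in>histories k t. cont P E (j # h) * R (last (j # h)))"
      unfolding a_def by (rule sum_histories_Suc_Cons)
    also have "\<dots> = (\<Sum>k\<in>UNIV. \<Sum>h\<in>histories k t. (1 - E [j]) * (P j k * (cont P E h * R (last h))))"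
      unfolding E_def
      by (intro sum.cong refl) (auto simp: cont_exit_rule_Cons histories_nonempty histories_def mult_ac)
    finally show ?thesis by (simp add: a_def sum_distrib_left)
  qed
  have summ: "summable (\<lambda>t. \<beta> ^ t * a k t)" for k unfolding a_def E_def
    using abs_cont_le_reach[OF P stopping_rule_exit_rule]
    by (intro summable_disc_value[OF P stopping_rule_exit_rule \<beta>])
  have fS: "fS P \<beta> R S k = (\<Sum>t. \<beta> ^ t * a k t)" for k
    by (simp add: fS_def f_val_def a_def E_def mult_ac)
  have "(\<Sum>t. \<beta> ^ t * a j t) - a j 0 = (\<Sum>t. \<beta> ^ Suc t * a j (Suc t))"
    using suminf_split_head[OF summ[of j]] by simp
  also have "\<dots> = (\<Sum>t. (1 - E [j]) * \<beta> * (\<Sum>k\<in>UNIV. P j k * (\<beta> ^ t * a k t)))"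
    by (simp add: a_Suc sum_distrib_left mult_ac)
  also have "\<dots> = (1 - E [j]) * \<beta> * (\<Sum>k\<in>UNIV. P j k * (\<Sum>t. \<beta> ^ t * a k t))"
    using summ by (simp add: suminf_mult suminf_sum summable_sum summable_mult)
  finally have "fS P \<beta> R S j = (1 - E [j]) * (R j + \<beta> * (\<Sum>k\<in>UNIV. P j k * fS P \<beta> R S k))"
    unfolding fS by (simp add: a_0 algebra_simps)
  thus ?thesis by (simp add: E_def exit_rule_def)
qed

lemma sum_UNIV_eq_sum_Compl: "sum f (UNIV::'n::finite set) = sum f S + sum f (- S)"
  using sum.union_disjoint[of S "- S" f] by (simp add: Compl_partition)

lemma f_val_decomposition:
  fixes P :: "'n::finite \<Rightarrow> 'n \<Rightarrow> real"
  assumes P: "stochastic P" and q: "stopping_rule q" and \<beta>: "0 < \<beta>" "\<beta> < 1"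
  shows "f_val P \<beta> R q i = fS P \<beta> R S i - (\<Sum>j\<in>S. rS P \<beta> R S j * x0 P \<beta> q i j)
                                         + (\<Sum>j\<in>-S. rS P \<beta> R S j * x1 P \<beta> q i j)"
proof -
  define F where "F = fS P \<beta> R S"
  define PF where "PF j = (\<Sum>k\<in>UNIV. P j k * F k)" for j
  define X0 where "X0 = x0 P \<beta> q i"
  define X1 where "X1 = x1 P \<beta> q i"
  define D where "D j = R j * X1 j - ((F j - \<beta> * PF j) * X1 j + F j * ((1 - \<beta>) * X0 j))" for j
  have F: "F j = (if j \<in> S then R j + \<beta> * PF j else 0)" for j
    unfolding F_def PF_def using fS_Bellman[OF P] \<beta> by simp
  have r: "rS P \<beta> R S j = R j + \<beta> * PF j - \<beta> * F j" for j
    by (simp add: rS_def PF_def F_def)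
  have "D j = (if j \<in> S then - rS P \<beta> R S j * X0 j else rS P \<beta> R S j * X1 j)" for j
    using F[of j] unfolding D_def r by (cases "j \<in> S") (simp_all add: algebra_simps)
  hence "(\<Sum>j\<in>UNIV. D j) = - (\<Sum>j\<in>S. rS P \<beta> R S j * X0 j) + (\<Sum>j\<in>-S. rS P \<beta> R S j * X1 j)"
    by (simp add: sum_UNIV_eq_sum_Compl[of _ S] sum_negf)
  moreover have "(\<Sum>j\<in>UNIV. D j) = f_val P \<beta> R q i - F i"
    using f_val_eq_sum_x1[OF P q, of \<beta> R i] telescope_occupancy[OF P q, of \<beta> F i] \<beta>
    unfolding D_def sum_subtractf sum.distrib PF_def X0_def X1_def by simp
  ultimately show ?thesis unfolding F_def X0_def X1_def by linarith
qed

lemma g_val_eq_f_val_1: "g_val P \<beta> q i = f_val P \<beta> (\<lambda>_. 1) q i"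
  by (simp add: g_val_def f_val_def)

lemma wS_eq_rS_1: "wS P \<beta> S j = rS P \<beta> (\<lambda>_. 1) S j"
  by (simp add: wS_def rS_def gS_def fS_def g_val_eq_f_val_1)

theorem proposition3:
  fixes P :: "'n::finite \<Rightarrow> 'n \<Rightarrow> real" and \<beta> \<nu> :: real and R :: "'n \<Rightarrow> real"
    and S :: "'n set" and q :: "'n list \<Rightarrow> real" and i :: 'n
  assumes "stochastic P" and "0 < \<beta>" and "\<beta> < 1" and "stopping_rule q"
  shows "(g_val P \<beta> q i = gS P \<beta> S i - (\<Sum>j\<in>S. wS P \<beta> S j * x0 P \<beta> q i j)
                                         + (\<Sum>j\<in>-S. wS P \<beta> S j * x1 P \<beta> q i j)) \<and>
    (f_val P \<beta> R q i = fS P \<beta> R S i - (\<Sum>j\<in>S. rS P \<beta> R S j * x0 P \<beta> q i j)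
                                         + (\<Sum>j\<in>-S. rS P \<beta> R S j * x1 P \<beta> q i j)) \<and>
    (f_val P \<beta> R q i - \<nu> * g_val P \<beta> q i
           = fS P \<beta> R S i - \<nu> * gS P \<beta> S i
             - (\<Sum>j\<in>S. (rS P \<beta> R S j - \<nu> * wS P \<beta> S j) * x0 P \<beta> q i j)
             + (\<Sum>j\<in>-S. (rS P \<beta> R S j - \<nu> * wS P \<beta> S j) * x1 P \<beta> q i j))"
proof -
  have g: "g_val P \<beta> q i = gS P \<beta> S i - (\<Sum>j\<in>S. wS P \<beta> S j * x0 P \<beta> q i j)
                                         + (\<Sum>j\<in>-S. wS P \<beta> S j * x1 P \<beta> q i j)"
    using f_val_decomposition[OF assms(1,4,2,3), of "\<lambda>_. 1"]
    by (simp add: g_val_eq_f_val_1 gS_def fS_def wS_eq_rS_1)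
  moreover have f: "f_val P \<beta> R q i = fS P \<beta> R S i - (\<Sum>j\<in>S. rS P \<beta> R S j * x0 P \<beta> q i j)
                                         + (\<Sum>j\<in>-S. rS P \<beta> R S j * x1 P \<beta> q i j)"
    by (rule f_val_decomposition[OF assms(1,4,2,3)])
  moreover have "f_val P \<beta> R q i - \<nu> * g_val P \<beta> q i
           = fS P \<beta> R S i - \<nu> * gS P \<beta> S i
             - (\<Sum>j\<in>S. (rS P \<beta> R S j - \<nu> * wS P \<beta> S j) * x0 P \<beta> q i j)
             + (\<Sum>j\<in>-S. (rS P \<beta> R S j - \<nu> * wS P \<beta> S j) * x1 P \<beta> q i j)"
    by (subst f, subst g)
      (simp add: left_diff_distrib right_diff_distrib distrib_left sum_subtractf sum_distrib_left mult.assoc)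
  ultimately show ?thesis by blast
qed

end
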